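(* Let $0<\delta<1$, $t>1$, $\lambda_c:=1/(t^{1-\delta}-1)$, $\lambda_c\le\lambda\le t^{1-\delta}-1$, let $0<k<t^{\delta-1}$, and let $\phi$ satisfy $0<\phi<\pi/2$ if $\ln\lambda\ge0$ and $0<\phi<\arctan(\pi/|\ln\lambda|)$ if $\ln\lambda<0$. For $z$ on the contour $\{z=1-k+R{\rm e}^{{\rm i}\phi}:0\le R<\infty\}$, $$\left|\frac{\partial F}{\partial z}(z;\lambda)\right|>\min\!\left(\frac{\pi}{2}-\phi,\ \ln\!\left(\frac{t^{\delta-1}}{k}\right)\right),$$ and for sufficiently large $R$, $\left|\frac{\partial F}{\partial z}\right|>\frac{\pi}{2}-\phi$.
   Context: $F(z;\lambda):=(1-z)\ln(1-z)+z\ln z+z\ln\lambda$, with branch cuts $(-\infty,0]$ and $[1,\infty)$. *)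

theory Defs
  imports "HOL-Analysis.Analysis"
begin

text \<open>F(z;lambda) = (1-z) Ln(1-z) + z Ln z + z ln lambda, using the principal
  complex logarithm Ln (branch cut (-infinity,0]); hence Ln(1-z) has cut [1,infinity).\<close>
definition Fpot :: "complex \<Rightarrow> real \<Rightarrow> complex" where
  "Fpot z lam = (1 - z) * Ln (1 - z) + z * Ln z + z * complex_of_real (ln lam)"

end

theory Submission
  imports Defs
begin

text \<open>Off the branch cuts, \<open>\<partial>F/\<partial>z = Ln z - Ln (1 - z) + ln \<lambda>\<close>. Write the contour as
  \<open>z = 1 - k + R exp (i\<phi>)\<close>, so \<open>1 - z = k - R exp (i\<phi>)\<close>. Near the start, \<open>R \<le> k cos \<phi>\<close>, the point \<open>1 - z\<close>
  stays in the disc of radius \<open>k\<close> about 0 while \<open>|z| \<ge> 1 - k\<close>, so the real part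
  \<open>ln (\<lambda> |z| / |1 - z|)\<close> exceeds \<open>ln (\<lambda> (1 - k) / k) > ln (t\<^bsup>\<delta>-1\<^esup> / k)\<close>, using the lower bound on \<open>\<lambda>\<close>.
  Further out, \<open>1 - z\<close> lies in the lower half plane and makes an obtuse angle with \<open>exp (i\<phi>)\<close>, so
  \<open>arg (1 - z) < \<phi> - \<pi>/2\<close> while \<open>arg z > 0\<close>, and the imaginary part exceeds \<open>\<pi>/2 - \<phi>\<close>.\<close>

lemma has_field_derivative_Fpot:
  assumes "z \<notin> \<real>\<^sub>\<le>\<^sub>0" "1 - z \<notin> \<real>\<^sub>\<le>\<^sub>0"
  shows "((\<lambda>w. Fpot w lam) has_field_derivative Ln z - Ln (1 - z) + of_real (ln lam)) (at z)"
proof -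
  have "z \<noteq> 0" "1 - z \<noteq> 0" using assms by auto
  then show ?thesis
    unfolding Fpot_def using assms by (auto intro!: derivative_eq_intros)
qed

lemma deriv_Fpot:
  assumes "z \<notin> \<real>\<^sub>\<le>\<^sub>0" "1 - z \<notin> \<real>\<^sub>\<le>\<^sub>0"
  shows "deriv (\<lambda>w. Fpot w lam) z = Ln z - Ln (1 - z) + of_real (ln lam)"
  using has_field_derivative_Fpot[OF assms] by (rule DERIV_imp_deriv)

lemma Im_Ln_less_of_inner_cis_neg:
  assumes "Im w < 0" "w \<bullet> cis \<phi> < 0" "0 \<le> \<phi>" "\<phi> \<le> pi / 2"
  shows "Im (Ln w) < \<phi> - pi / 2"
proof -
  have "w \<noteq> 0" using assms(1) by auto
  define a where "a = Im (Ln w)"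
  have a_range: "- pi < a" "a \<le> pi"
    unfolding a_def using \<open>w \<noteq> 0\<close> mpi_less_Im_Ln Im_Ln_le_pi by auto
  have polar_form: "w = of_real (cmod w) * exp (\<i> * of_real a)"
    using Arg_eq[OF \<open>w \<noteq> 0\<close>] Arg_eq_Im_Ln[OF \<open>w \<noteq> 0\<close>] by (simp add: a_def)
  have polar: "Re w = cmod w * cos a" "Im w = cmod w * sin a"
    using arg_cong[OF polar_form, of Re] arg_cong[OF polar_form, of Im]
    by (simp_all add: Re_exp Im_exp)
  have "a < 0"
    using polar(2) assms(1) sin_ge_zero[of a] a_range by (smt (verit) norm_ge_zero mult_nonneg_nonneg)
  have "w \<bullet> cis \<phi> = cmod w * cos (a - \<phi>)"
    by (simp add: inner_complex_def polar cos_diff algebra_simps)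
  then have "cos (a - \<phi>) < 0"
    using assms(2) by (smt (verit) norm_ge_zero mult_nonneg_nonneg)
  then have "a - \<phi> < - (pi / 2)"
    using cos_ge_zero[of "a - \<phi>"] \<open>a < 0\<close> assms(3,4) by (smt (verit))
  then show ?thesis unfolding a_def by simp
qed

definition ray :: "real \<Rightarrow> real \<Rightarrow> real \<Rightarrow> complex" where
  "ray a \<phi> R = of_real a + of_real R * exp (\<i> * of_real \<phi>)"

lemma Re_ray [simp]: "Re (ray a \<phi> R) = a + R * cos \<phi>"
  and Im_ray [simp]: "Im (ray a \<phi> R) = R * sin \<phi>"
  by (simp_all add: ray_def Re_exp Im_exp)

lemma ray_notin_branch_cuts:
  assumes "0 < k" "k < 1" "0 < \<phi>" "\<phi> \<le> pi / 2" "0 \<le> R"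
  shows "ray (1 - k) \<phi> R \<notin> \<real>\<^sub>\<le>\<^sub>0" "1 - ray (1 - k) \<phi> R \<notin> \<real>\<^sub>\<le>\<^sub>0"
proof -
  have "0 \<le> cos \<phi>" "0 < sin \<phi>"
    using assms(3,4) by (auto intro: cos_ge_zero sin_gt_zero)
  then have "0 < Re (ray (1 - k) \<phi> R)"
    using assms by (simp add: add_pos_nonneg)
  then show "ray (1 - k) \<phi> R \<notin> \<real>\<^sub>\<le>\<^sub>0"
    by (simp add: complex_nonpos_Reals_iff)
  show "1 - ray (1 - k) \<phi> R \<notin> \<real>\<^sub>\<le>\<^sub>0"
  proof (cases "R = 0")
    case True
    then show ?thesis using assms(1) by (simp add: complex_nonpos_Reals_iff)
  next
    case False
    then show ?thesis using \<open>0 < sin \<phi>\<close> by (simp add: complex_nonpos_Reals_iff)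
  qed
qed

lemma Im_Ln_diff_ray_gt:
  assumes "0 < k" "0 < \<phi>" "\<phi> \<le> pi / 2" "k * cos \<phi> < R"
  defines "z \<equiv> ray (1 - k) \<phi> R"
  shows "pi / 2 - \<phi> < Im (Ln z - Ln (1 - z))"
proof -
  have "0 \<le> cos \<phi>" "0 < sin \<phi>"
    using assms(2,3) by (auto intro: cos_ge_zero sin_gt_zero)
  then have "0 < R" using assms(1,4) by (smt (verit) mult_nonneg_nonneg)
  then have "0 < Im (Ln z)"
    using \<open>0 < sin \<phi>\<close> Im_Ln_pos_lt_imp by (simp add: z_def)
  moreover have "Im (Ln (1 - z)) < \<phi> - pi / 2"
  proof (rule Im_Ln_less_of_inner_cis_neg)
    show "Im (1 - z) < 0" using \<open>0 < R\<close> \<open>0 < sin \<phi>\<close> by (simp add: z_def)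
    have "(1 - z) \<bullet> cis \<phi> = k * cos \<phi> - R"
      by (simp add: z_def inner_complex_def algebra_simps)
        (metis distrib_left mult.right_neutral sin_cos_squared_add3)
    then show "(1 - z) \<bullet> cis \<phi> < 0" using assms(4) by simp
  qed (use assms(2,3) in auto)
  ultimately show ?thesis by simp
qed

lemma norm_one_minus_ray_le:
  assumes "0 \<le> k" "0 \<le> R" "R \<le> 2 * k * cos \<phi>"
  shows "cmod (1 - ray (1 - k) \<phi> R) \<le> k"
proof (rule power2_le_imp_le)
  have "(cmod (1 - ray (1 - k) \<phi> R))\<^sup>2 = (k - R * cos \<phi>)\<^sup>2 + (R * sin \<phi>)\<^sup>2"
    by (simp add: cmod_power2)
  also have "\<dots> = k\<^sup>2 - R * (2 * k * cos \<phi> - R)"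
    by (simp add: algebra_simps power2_eq_square)
      (metis distrib_left mult.right_neutral sin_cos_squared_add3)
  also have "\<dots> \<le> k\<^sup>2" using assms by simp
  finally show "(cmod (1 - ray (1 - k) \<phi> R))\<^sup>2 \<le> k\<^sup>2" .
qed (use assms(1) in simp)

lemma norm_ray_ge:
  assumes "0 \<le> R" "0 \<le> cos \<phi>"
  shows "a \<le> cmod (ray a \<phi> R)"
  using complex_Re_le_cmod[of "ray a \<phi> R"] mult_nonneg_nonneg[OF assms] by simp

lemma Re_Ln_diff_ray_gt:
  assumes "0 < k" "k < s" "s < 1" "s / (1 - s) \<le> lam"
    and "0 < \<phi>" "\<phi> \<le> pi / 2" "0 \<le> R" "R \<le> 2 * k * cos \<phi>"
  defines "z \<equiv> ray (1 - k) \<phi> R"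
  shows "ln (s / k) < Re (Ln z - Ln (1 - z) + of_real (ln lam))"
proof -
  have "z \<noteq> 0" "1 - z \<noteq> 0"
    using ray_notin_branch_cuts[of k \<phi> R] assms by auto
  have "0 < lam" using assms(1-4) by (smt (verit) divide_pos_pos)
  have "s < lam * (1 - k)"
  proof -
    have "s < s / (1 - s) * (1 - k)" using assms(1-3) by (simp add: field_simps)
    also have "\<dots> \<le> lam * (1 - k)" using assms(1-4) by (intro mult_right_mono) auto
    finally show ?thesis .
  qed
  then have "s / k < lam * (1 - k) / k" using assms(1) by (simp add: divide_strict_right_mono)
  also have "\<dots> \<le> lam * cmod z / cmod (1 - z)"
  proof (rule frac_le)
    have "0 \<le> cos \<phi>" using assms(5,6) by (intro cos_ge_zero) auto
    then show "lam * (1 - k) \<le> lam * cmod z"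
      using norm_ray_ge[OF assms(7)] \<open>0 < lam\<close> by (simp add: z_def)
    show "cmod (1 - z) \<le> k"
      using norm_one_minus_ray_le assms(1,7,8) by (simp add: z_def)
  qed (use \<open>0 < lam\<close> \<open>1 - z \<noteq> 0\<close> in auto)
  finally have "ln (s / k) < ln (lam * cmod z / cmod (1 - z))"
    using assms(1,2) \<open>0 < lam\<close> \<open>z \<noteq> 0\<close> \<open>1 - z \<noteq> 0\<close>
    by (intro ln_less_cancel_iff[THEN iffD2]) auto
  also have "\<dots> = Re (Ln z - Ln (1 - z) + of_real (ln lam))"
    using \<open>0 < lam\<close> \<open>z \<noteq> 0\<close> \<open>1 - z \<noteq> 0\<close> by (simp add: ln_div ln_mult)
  finally show ?thesis .
qed

lemma norm_deriv_Fpot_ray_gt: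
  assumes "0 < k" "k < 1" "0 < \<phi>" "\<phi> \<le> pi / 2" "k * cos \<phi> < R"
  shows "pi / 2 - \<phi> < norm (deriv (\<lambda>w. Fpot w lam) (ray (1 - k) \<phi> R))"
proof -
  have "0 \<le> R"
    using assms(1,3,4,5) cos_ge_zero[of \<phi>] by (smt (verit) mult_nonneg_nonneg)
  then have "Im (deriv (\<lambda>w. Fpot w lam) (ray (1 - k) \<phi> R)) > pi / 2 - \<phi>"
    using Im_Ln_diff_ray_gt[OF assms(1,3,4,5)] ray_notin_branch_cuts[OF assms(1-4)]
    by (simp add: deriv_Fpot)
  then show ?thesis using abs_Im_le_cmod by (smt (verit))
qed

lemma norm_deriv_Fpot_ray_gt_min:
  assumes "0 < k" "k < s" "s < 1" "s / (1 - s) \<le> lam" "0 < \<phi>" "\<phi> \<le> pi / 2" "0 \<le> R"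
  shows "min (pi / 2 - \<phi>) (ln (s / k)) < norm (deriv (\<lambda>w. Fpot w lam) (ray (1 - k) \<phi> R))"
proof (cases "R \<le> k * cos \<phi>")
  case True
  have "0 \<le> k * cos \<phi>" using assms(1,5,6) cos_ge_zero[of \<phi>] by simp
  then have "R \<le> 2 * k * cos \<phi>" using True by simp
  then have "ln (s / k) < Re (deriv (\<lambda>w. Fpot w lam) (ray (1 - k) \<phi> R))"
    using Re_Ln_diff_ray_gt[OF assms] ray_notin_branch_cuts[of k \<phi> R] assms
    by (simp add: deriv_Fpot)
  then show ?thesis using abs_Re_le_cmod by (smt (verit))
next
  case False
  then show ?thesis using norm_deriv_Fpot_ray_gt[of k \<phi> R lam] assms by simp
qed

theorem lemma4p1:
  fixes \<delta> t lam k \<phi> :: real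
  assumes "0 < \<delta>" "\<delta> < 1" "t > 1"
    and "1 / (t powr (1 - \<delta>) - 1) \<le> lam" "lam \<le> t powr (1 - \<delta>) - 1"
    and "0 < k" "k < t powr (\<delta> - 1)"
    and "ln lam \<ge> 0 \<Longrightarrow> 0 < \<phi> \<and> \<phi> < pi / 2"
    and "ln lam < 0 \<Longrightarrow> 0 < \<phi> \<and> \<phi> < arctan (pi / \<bar>ln lam\<bar>)"
  shows "(\<forall>R::real. R \<ge> 0 \<longrightarrow>
            norm (deriv (\<lambda>w. Fpot w lam) (complex_of_real (1 - k) + complex_of_real R * exp (\<i> * complex_of_real \<phi>)))
              > min (pi / 2 - \<phi>) (ln (t powr (\<delta> - 1) / k)))
       \<and> (\<exists>R0::real. \<forall>R\<ge>R0.
            norm (deriv (\<lambda>w. Fpot w lam) (complex_of_real (1 - k) + complex_of_real R * exp (\<i> * complex_of_real \<phi>)))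
              > pi / 2 - \<phi>)"
proof -
  define s where "s = t powr (\<delta> - 1)"
  have "0 < s" "s < 1"
    using assms(2,3) by (auto simp: s_def intro: powr_less_one)
  have t_powr: "t powr (1 - \<delta>) = 1 / s"
    by (simp add: s_def powr_minus_divide[symmetric])
  have "1 / (t powr (1 - \<delta>) - 1) = s / (1 - s)"
    unfolding t_powr using \<open>0 < s\<close> \<open>s < 1\<close> by (simp add: field_simps)
  then have "s / (1 - s) \<le> lam"
    using assms(4) by simp
  have "0 < \<phi>" "\<phi> < pi / 2"
    using assms(8,9) arctan_ubound[of "pi / \<bar>ln lam\<bar>"] by (cases "ln lam \<ge> 0"; linarith)+
  have "k < 1" using assms(7) \<open>s < 1\<close> by (simp add: s_def)
  show ?thesis
    unfolding ray_def[symmetric]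
  proof (intro conjI allI impI exI)
    show "min (pi / 2 - \<phi>) (ln (t powr (\<delta> - 1) / k)) < norm (deriv (\<lambda>w. Fpot w lam) (ray (1 - k) \<phi> R))"
      if "0 \<le> R" for R
      using norm_deriv_Fpot_ray_gt_min[of k s lam \<phi> R] that assms(6,7) \<open>s < 1\<close>
        \<open>s / (1 - s) \<le> lam\<close> \<open>0 < \<phi>\<close> \<open>\<phi> < pi / 2\<close> by (simp add: s_def)
    show "pi / 2 - \<phi> < norm (deriv (\<lambda>w. Fpot w lam) (ray (1 - k) \<phi> R))"
      if "k * cos \<phi> + 1 \<le> R" for R
      using norm_deriv_Fpot_ray_gt[of k \<phi> R lam] that assms(6) \<open>k < 1\<close> \<open>0 < \<phi>\<close> \<open>\<phi> < pi / 2\<close>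
      by simp
  qed
qed

end
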